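(* Let $X_1,\dots,X_n$ be i.i.d. real random variables whose common distribution is symmetric about $\mu\in\mathbb{R}$ and satisfies $\mathbb{E}\big[|X_1-\mathbb{E}X_1|^{1+a}\big]=M<\infty$ for some $a\in(0,1]$. Let $1\le r\le m$ be integers, $k\le n$ an integer, $\tilde n=\lfloor n/k\rfloor$, let $R(\theta)$ be the one-sided resampled median-of-means rank defined in the context, $\Theta_n=\{\theta: R(\theta)\le m-r\}$ and $U=\sup\Theta_n$. Then $$\mathbb{P}\Big(U-\mu>4\Big(\frac{(12M)^{1/a}}{\tilde n}\Big)^{\frac{a}{1+a}}\Big)\le (m-r)\big(2k\exp(-\tilde n/8)+2\exp(-k/8)\big).$$
   Context: Blocks: for $\ell=1,\dots,k$ let $B_\ell=\{i\in[n]: i\equiv \ell \pmod k\}$. Median: for reals $y_1,\dots,y_k$ with order statistics $y_{(1)}\le\dots\le y_{(k)}$, $\mathrm{med}(y_1,\dots,y_k)=y_{(k/2)}$ if $k$ is even and $y_{(\lfloor k/2\rfloor+1)}$ if $k$ is odd. Median-of-means: $\widehat\mu(x_1,\dots,x_n)=\mathrm{med}\big(\frac{1}{|B_1|}\sum_{i\in B_1}x_i,\dots,\frac{1}{|B_k|}\sum_{i\in B_k}x_i\big)$. Randomization: $\{\alpha_{i,j}\}_{i\in[n],j\in[m-1]}$ i.i.d. Rademacher signs independent of the data; $\pi$ a uniformly random permutation of $\{0,\dots,m-1\}$ independent of data and signs. For $\theta\in\mathbb{R}$: $\mathcal{D}_0(\theta)=(X_1,\dots,X_n)$, $\mathcal{D}_j(\theta)=(\alpha_{1,j}(X_1-\theta)+\theta,\dots,\alpha_{n,j}(X_n-\theta)+\theta)$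 for $j\in[m-1]$ (same signs for all $\theta$); $S_j(\theta)=\widehat\mu(\mathcal{D}_j(\theta))-\theta$ for $j=0,\dots,m-1$. $S_j(\theta)\prec_\pi S_l(\theta)$ iff $S_j(\theta)<S_l(\theta)$, or $S_j(\theta)=S_l(\theta)$ and $\pi(j)<\pi(l)$. $R(\theta)=1+\sum_{j=1}^{m-1}\mathbb{I}\big(S_0(\theta)\prec_\pi S_j(\theta)\big)$. The supremum of the empty set is $-\infty$. *)

theory Defs
  imports "HOL-Probability.Probability" "HOL-Combinatorics.Permutations"
begin

definition block :: "nat \<Rightarrow> nat \<Rightarrow> nat \<Rightarrow> nat set" where
  "block n k l = {i \<in> {1..n}. i mod k = l mod k}"

text \<open>Median: y_(k/2) if k even, y_(floor(k/2)+1) if k odd (order statistics 1-indexed).\<close>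
definition med :: "real list \<Rightarrow> real" where
  "med ys = (let zs = sort ys; k = length ys in
              if even k then zs ! (k div 2 - 1) else zs ! (k div 2))"

definition mom :: "nat \<Rightarrow> nat \<Rightarrow> (nat \<Rightarrow> real) \<Rightarrow> real" where
  "mom n k x = med (map (\<lambda>l. (\<Sum>i\<in>block n k l. x i) / real (card (block n k l))) [1..<k+1])"

definition rdata :: "(nat \<Rightarrow> real) \<Rightarrow> (nat \<Rightarrow> nat \<Rightarrow> real) \<Rightarrow> nat \<Rightarrow> real \<Rightarrow> nat \<Rightarrow> real" where
  "rdata x \<alpha> j \<theta> i = (if j = 0 then x i else \<alpha> i j * (x i - \<theta>) + \<theta>)"

definition Sstat :: "nat \<Rightarrow> nat \<Rightarrow> (nat \<Rightarrow> real) \<Rightarrow> (nat \<Rightarrow> nat \<Rightarrow> real) \<Rightarrow> nat \<Rightarrow> real \<Rightarrow> real" where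
  "Sstat n k x \<alpha> j \<theta> = mom n k (rdata x \<alpha> j \<theta>) - \<theta>"

definition prec_pi :: "(nat \<Rightarrow> nat) \<Rightarrow> (nat \<Rightarrow> real) \<Rightarrow> nat \<Rightarrow> nat \<Rightarrow> bool" where
  "prec_pi \<pi> S j l \<longleftrightarrow> S j < S l \<or> (S j = S l \<and> \<pi> j < \<pi> l)"

definition rank :: "nat \<Rightarrow> nat \<Rightarrow> nat \<Rightarrow> (nat \<Rightarrow> real) \<Rightarrow> (nat \<Rightarrow> nat \<Rightarrow> real) \<Rightarrow> (nat \<Rightarrow> nat) \<Rightarrow> real \<Rightarrow> nat" where
  "rank n k m x \<alpha> \<pi> \<theta> =
     1 + card {j \<in> {1..m-1}. prec_pi \<pi> (\<lambda>j. Sstat n k x \<alpha> j \<theta>) 0 j}"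

definition Theta_set :: "nat \<Rightarrow> nat \<Rightarrow> nat \<Rightarrow> nat \<Rightarrow> (nat \<Rightarrow> real) \<Rightarrow> (nat \<Rightarrow> nat \<Rightarrow> real) \<Rightarrow> (nat \<Rightarrow> nat) \<Rightarrow> real set" where
  "Theta_set n k m r x \<alpha> \<pi> = {\<theta>. rank n k m x \<alpha> \<pi> \<theta> \<le> m - r}"

text \<open>U = sup Theta_n, in the extended reals (sup of the empty set is -infinity).\<close>
definition Uupper :: "nat \<Rightarrow> nat \<Rightarrow> nat \<Rightarrow> nat \<Rightarrow> (nat \<Rightarrow> real) \<Rightarrow> (nat \<Rightarrow> nat \<Rightarrow> real) \<Rightarrow> (nat \<Rightarrow> nat) \<Rightarrow> ereal" where
  "Uupper n k m r x \<alpha> \<pi> = Sup (ereal ` Theta_set n k m r x \<alpha> \<pi>)"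

end

(*
  Choose s with q^a s^(1+a) = 12 M, where q = n div k.  For a block of N >= q independent
  summands W_i whose (1+a)-th absolute moments are at most M and whose truncations at every
  level are centred, truncating at N s and applying Chebyshev's inequality to the truncated
  sum gives P(|sum W_i| > N s) <= 2 M / (N^a s^(1+a)) <= 1/6.  The k blocks are independent,
  so by Hoeffding's inequality at least half of them deviate in this sense with probability
  at most exp(-k/8).  This applies to W_i = X_i - mu and, for every resample j, to the
  sign-flipped W_i = alpha_ij (X_i - mu).

  If fewer than half of the blocks of X deviate, the median-of-means of the data is at most
  mu + s.  Call resample j good if no block has a sign sum above half its size
  (by Hoeffding this fails with probability at most k exp(-q/8)) and fewer than half of its
  blocks deviate.  The block mean of D_j(theta) is
  mu + mean(alpha (X - mu)) + (theta - mu) (1 - mean alpha),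
  which for a good j exceeds mu + s in every non-deviating block once theta > mu + 4 s.  So then
  S_0(theta) < S_j(theta) for every good j, and R(theta) exceeds the number of good resamples.
  Consequently U > mu + 4 s forces many deviating blocks of X or at least r bad resamples
  among the m - 1, and Markov's inequality bounds the latter event by (m - 1)/r <= m - r times
  the probability that a single resample is bad.
*)
theory Submission
  imports Defs
begin

section \<open>Medians and blocks\<close>

lemma med_eq_nth_sort: "med ys = sort ys ! ((length ys - 1) div 2)"
  unfolding med_def Let_def by (cases "length ys") (auto elim!: oddE)

lemma length_filter_drop_le: "length (filter P (drop p xs)) \<le> length (filter P xs)"
  by (metis append_take_drop_id filter_append length_append le_add2)

lemma length_filter_take_le: "length (filter P (take p xs)) \<le> length (filter P xs)"
  by (metis append_take_drop_id filter_append length_append le_add1)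

lemma med_le_if_few_greater:
  fixes ys :: "real list"
  assumes "ys \<noteq> []" and "2 * length (filter (\<lambda>y. v < y) ys) < length ys"
  shows "med ys \<le> v"
proof (rule ccontr)
  define zs p where "zs = sort ys" and "p = (length ys - 1) div 2"
  have p: "p < length zs" using assms(1) by (cases ys) (auto simp: zs_def p_def less_Suc_eq_le)
  assume "\<not> med ys \<le> v"
  then have "v < zs ! p" by (simp add: med_eq_nth_sort zs_def p_def)
  moreover have "sorted (zs ! p # drop (Suc p) zs)"
    using p by (metis Cons_nth_drop_Suc sorted_sort sorted_wrt_drop zs_def)
  ultimately have "filter (\<lambda>y. v < y) (zs ! p # drop (Suc p) zs) = zs ! p # drop (Suc p) zs"
    by (auto simp: filter_id_conv intro: less_le_trans)
  then have "length zs - p \<le> length (filter (\<lambda>y. v < y) zs)"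
    using length_filter_drop_le[of "\<lambda>y. v < y" p zs] by (simp add: Cons_nth_drop_Suc p)
  moreover have "length zs \<le> 2 * (length zs - p)" by (simp add: p_def zs_def)
  ultimately show False using assms(2) by (simp add: zs_def filter_sort)
qed

lemma less_med_if_few_le:
  fixes ys :: "real list"
  assumes "ys \<noteq> []" and "2 * length (filter (\<lambda>y. y \<le> v) ys) < length ys"
  shows "v < med ys"
proof (rule ccontr)
  define zs p where "zs = sort ys" and "p = (length ys - 1) div 2"
  have p: "p < length zs" using assms(1) by (cases ys) (auto simp: zs_def p_def less_Suc_eq_le)
  assume "\<not> v < med ys"
  then have "zs ! p \<le> v" by (simp add: med_eq_nth_sort zs_def p_def)
  moreover have "sorted (take p zs @ [zs ! p])"
    using p by (metis sorted_sort sorted_wrt_take take_Suc_conv_app_nth zs_def)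
  ultimately have "filter (\<lambda>y. y \<le> v) (take p zs @ [zs ! p]) = take p zs @ [zs ! p]"
    by (auto simp: filter_id_conv sorted_append)
  then have "Suc p \<le> length (filter (\<lambda>y. y \<le> v) zs)"
    using length_filter_take_le[of "\<lambda>y. y \<le> v" "Suc p" zs] p by (simp add: take_Suc_conv_app_nth)
  moreover have "length zs \<le> 2 * Suc p" by (simp add: p_def zs_def)
  ultimately show False using assms(2) by (simp add: zs_def filter_sort)
qed

lemma block_subset: "block n k l \<subseteq> {1..n}"
  unfolding block_def by auto

lemma finite_block [simp]: "finite (block n k l)"
  using finite_subset[OF block_subset] by blast

lemma card_block_ge:
  assumes "1 \<le> k" "l \<in> {1..k}"
  shows "n div k \<le> card (block n k l)"
proof -
  have "(\<lambda>c. c * k + l) ` {0..<n div k} \<subseteq> block n k l"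
  proof
    fix x assume "x \<in> (\<lambda>c. c * k + l) ` {0..<n div k}"
    then obtain c where c: "c < n div k" "x = c * k + l" by auto
    have "(c + 1) * k \<le> n div k * k" using c(1) by (intro mult_le_mono1) simp
    also have "\<dots> \<le> n" by simp
    finally show "x \<in> block n k l" using c(2) assms(2) unfolding block_def by auto
  qed
  moreover have "inj_on (\<lambda>c. c * k + l) {0..<n div k}" using assms(1) by (simp add: inj_on_def)
  ultimately show ?thesis using card_inj_on_le by fastforce
qed

lemma card_block_pos:
  assumes "1 \<le> k" "k \<le> n" "l \<in> {1..k}"
  shows "0 < card (block n k l)"
proof -
  have "1 \<le> n div k" using div_le_mono[OF assms(2), of k] assms(1) by simp
  then show ?thesis using card_block_ge[OF assms(1,3), of n] by linarith
qed

lemma disjoint_family_block: "disjoint_family_on (block n k) {1..k}"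
  unfolding disjoint_family_on_def
proof (intro ballI impI)
  fix l l' assume l: "l \<in> {1..k}" "l' \<in> {1..k}" "l \<noteq> l'"
  have mod_k: "i mod k = (if i = k then 0 else i)" if "i \<in> {1..k}" for i
    using that by (cases "i = k") simp_all
  have "l mod k \<noteq> l' mod k"
    using l mod_k[OF l(1)] mod_k[OF l(2)] by (simp split: if_splits)
  then show "block n k l \<inter> block n k l' = {}"
    unfolding block_def by auto
qed

section \<open>Comparing the original and the resampled statistics\<close>

definition block_mean :: "nat \<Rightarrow> nat \<Rightarrow> (nat \<Rightarrow> real) \<Rightarrow> nat \<Rightarrow> real" where
  "block_mean n k x l = (\<Sum>i\<in>block n k l. x i) / real (card (block n k l))"

definition deviating_blocks :: "nat \<Rightarrow> nat \<Rightarrow> real \<Rightarrow> (nat \<Rightarrow> real) \<Rightarrow> nat set" where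
  "deviating_blocks n k s w =
     {l \<in> {1..k}. real (card (block n k l)) * s < \<bar>\<Sum>i\<in>block n k l. w i\<bar>}"

definition good_resample ::
    "nat \<Rightarrow> nat \<Rightarrow> real \<Rightarrow> real \<Rightarrow> (nat \<Rightarrow> real) \<Rightarrow> (nat \<Rightarrow> nat \<Rightarrow> real) \<Rightarrow> nat \<Rightarrow> bool" where
  "good_resample n k s \<mu> x \<alpha> j \<longleftrightarrow>
     (\<forall>l\<in>{1..k}. 2 * (\<Sum>i\<in>block n k l. \<alpha> i j) \<le> real (card (block n k l))) \<and>
     2 * card (deviating_blocks n k s (\<lambda>i. \<alpha> i j * (x i - \<mu>))) < k"

lemma mom_eq_med_block_mean: "mom n k x = med (map (block_mean n k x) [1..<k+1])"
  unfolding mom_def block_mean_def ..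

lemma length_filter_map_upt:
  "length (filter P (map f [1..<k+1])) = card {l \<in> {1..k}. P (f l)}"
proof -
  have "length (filter P (map f [1..<k+1])) = card ({x. P (f x)} \<inter> set [1..<k+1])"
    by (simp add: filter_map distinct_length_filter comp_def)
  also have "{x. P (f x)} \<inter> set [1..<k+1] = {l \<in> {1..k}. P (f l)}" by auto
  finally show ?thesis .
qed

lemma mom_le_if_few_deviating:
  assumes "1 \<le> k" "k \<le> n" "2 * card (deviating_blocks n k s (\<lambda>i. x i - \<mu>)) < k"
  shows "mom n k x \<le> \<mu> + s"
  unfolding mom_eq_med_block_mean
proof (rule med_le_if_few_greater)
  show "map (block_mean n k x) [1..<k+1] \<noteq> []" using assms(1) by simp
  have "{l \<in> {1..k}. \<mu> + s < block_mean n k x l} \<subseteq> deviating_blocks n k s (\<lambda>i. x i - \<mu>)"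
  proof safe
    fix l assume l: "l \<in> {1..k}" and gt: "\<mu> + s < block_mean n k x l"
    have N: "0 < real (card (block n k l))" using card_block_pos[OF assms(1,2) l] by simp
    then have "real (card (block n k l)) * (\<mu> + s) < (\<Sum>i\<in>block n k l. x i)"
      using gt by (simp add: block_mean_def pos_less_divide_eq mult.commute)
    then have "real (card (block n k l)) * s < (\<Sum>i\<in>block n k l. x i - \<mu>)"
      by (simp add: sum_subtractf algebra_simps)
    then show "l \<in> deviating_blocks n k s (\<lambda>i. x i - \<mu>)"
      using l unfolding deviating_blocks_def by auto
  qed
  then have "card {l \<in> {1..k}. \<mu> + s < block_mean n k x l} \<le> card (deviating_blocks n k s (\<lambda>i. x i - \<mu>))"
    by (intro card_mono) (auto simp: deviating_blocks_def)
  then show "2 * length (filter (\<lambda>y. \<mu> + s < y) (map (block_mean n k x) [1..<k+1]))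
             < length (map (block_mean n k x) [1..<k+1])"
    using assms(3) by (simp only: length_filter_map_upt length_map length_upt)
qed

lemma resampled_sum_gt:
  fixes c x :: "'i \<Rightarrow> real"
  assumes "finite B" "B \<noteq> {}"
    and signs: "2 * (\<Sum>i\<in>B. c i) \<le> real (card B)"
    and dev: "\<bar>\<Sum>i\<in>B. c i * (x i - \<mu>)\<bar> \<le> real (card B) * s"
    and \<theta>: "\<mu> + 4 * s < \<theta>"
  shows "real (card B) * (\<mu> + s) < (\<Sum>i\<in>B. c i * (x i - \<theta>) + \<theta>)"
proof -
  define N \<delta> where "N = real (card B)" and "\<delta> = \<theta> - \<mu>"
  have N: "0 < N" using assms(1,2) by (simp add: N_def card_gt_0_iff)
  moreover have "0 \<le> N * s" using dev abs_ge_zero order_trans unfolding N_def by blast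
  ultimately have "0 \<le> s" by (simp add: zero_le_mult_iff)
  then have \<delta>: "0 < \<delta>" using \<theta> by (simp add: \<delta>_def)
  have "(\<Sum>i\<in>B. c i * (x i - \<theta>) + \<theta>) = (\<Sum>i\<in>B. c i * (x i - \<mu>)) - \<delta> * (\<Sum>i\<in>B. c i) + N * \<theta>"
    by (simp add: N_def \<delta>_def sum.distrib sum_subtractf sum_distrib_left algebra_simps)
  moreover have "\<delta> * (\<Sum>i\<in>B. c i) \<le> \<delta> * (N / 2)"
    using signs \<delta> by (intro mult_left_mono) (simp_all add: N_def)
  moreover have "- (N * s) \<le> (\<Sum>i\<in>B. c i * (x i - \<mu>))"
    using dev by (simp add: N_def abs_le_iff)
  moreover have "0 < N * (\<delta> - 4 * s)"
    using N \<theta> by (simp add: \<delta>_def)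
  ultimately show ?thesis
    unfolding N_def[symmetric] by (simp add: \<delta>_def algebra_simps)
qed

lemma less_mom_resampled_if_good:
  assumes "1 \<le> k" "k \<le> n" "1 \<le> j" "\<mu> + 4 * s < \<theta>" "good_resample n k s \<mu> x \<alpha> j"
  shows "\<mu> + s < mom n k (rdata x \<alpha> j \<theta>)"
  unfolding mom_eq_med_block_mean
proof (rule less_med_if_few_le)
  let ?y = "rdata x \<alpha> j \<theta>"
  show "map (block_mean n k ?y) [1..<k+1] \<noteq> []" using assms(1) by simp
  have "{l \<in> {1..k}. block_mean n k ?y l \<le> \<mu> + s} \<subseteq> deviating_blocks n k s (\<lambda>i. \<alpha> i j * (x i - \<mu>))"
  proof safe
    fix l assume l: "l \<in> {1..k}" and le: "block_mean n k ?y l \<le> \<mu> + s"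
    have N: "0 < card (block n k l)" using card_block_pos[OF assms(1,2) l] .
    show "l \<in> deviating_blocks n k s (\<lambda>i. \<alpha> i j * (x i - \<mu>))"
    proof (rule ccontr)
      assume "l \<notin> deviating_blocks n k s (\<lambda>i. \<alpha> i j * (x i - \<mu>))"
      then have "real (card (block n k l)) * (\<mu> + s)
                 < (\<Sum>i\<in>block n k l. \<alpha> i j * (x i - \<theta>) + \<theta>)"
        using l N assms(4,5) unfolding good_resample_def deviating_blocks_def
        by (intro resampled_sum_gt) auto
      also have "\<dots> = (\<Sum>i\<in>block n k l. ?y i)"
        using assms(3) by (simp add: rdata_def)
      finally have "real (card (block n k l)) * (\<mu> + s) < (\<Sum>i\<in>block n k l. ?y i)" .
      with le N show False
        by (simp add: block_mean_def divide_le_eq mult.commute)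
    qed
  qed
  then have "card {l \<in> {1..k}. block_mean n k ?y l \<le> \<mu> + s}
             \<le> card (deviating_blocks n k s (\<lambda>i. \<alpha> i j * (x i - \<mu>)))"
    by (intro card_mono) (auto simp: deviating_blocks_def)
  then show "2 * length (filter (\<lambda>v. v \<le> \<mu> + s) (map (block_mean n k ?y) [1..<k+1]))
             < length (map (block_mean n k ?y) [1..<k+1])"
    using assms(5) unfolding good_resample_def
    by (simp only: length_filter_map_upt length_map length_upt) simp
qed

lemma Sstat_0_less_if_good:
  assumes "1 \<le> k" "k \<le> n" "1 \<le> j" "\<mu> + 4 * s < \<theta>"
    and "2 * card (deviating_blocks n k s (\<lambda>i. x i - \<mu>)) < k"
    and "good_resample n k s \<mu> x \<alpha> j"
  shows "Sstat n k x \<alpha> 0 \<theta> < Sstat n k x \<alpha> j \<theta>"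
proof -
  have "rdata x \<alpha> 0 \<theta> = x" by (simp add: rdata_def fun_eq_iff)
  then show ?thesis
    using mom_le_if_few_deviating[OF assms(1,2,5)] less_mom_resampled_if_good[OF assms(1-4,6)]
    by (simp add: Sstat_def)
qed

lemma card_good_resamples_less_rank:
  assumes "1 \<le> k" "k \<le> n" "\<mu> + 4 * s < \<theta>"
    and "2 * card (deviating_blocks n k s (\<lambda>i. x i - \<mu>)) < k"
  shows "card {j \<in> {1..m-1}. good_resample n k s \<mu> x \<alpha> j} < rank n k m x \<alpha> \<pi> \<theta>"
proof -
  have "{j \<in> {1..m-1}. good_resample n k s \<mu> x \<alpha> j}
        \<subseteq> {j \<in> {1..m-1}. prec_pi \<pi> (\<lambda>j. Sstat n k x \<alpha> j \<theta>) 0 j}"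
    using Sstat_0_less_if_good[OF assms(1,2) _ assms(3,4)] by (auto simp: prec_pi_def)
  then have "card {j \<in> {1..m-1}. good_resample n k s \<mu> x \<alpha> j}
             \<le> card {j \<in> {1..m-1}. prec_pi \<pi> (\<lambda>j. Sstat n k x \<alpha> j \<theta>) 0 j}"
    by (intro card_mono) auto
  then show ?thesis by (simp add: rank_def)
qed

lemma Uupper_eq_MInf:
  assumes "m \<le> r"
  shows "Uupper n k m r x \<alpha> \<pi> = -\<infinity>"
proof -
  have "Theta_set n k m r x \<alpha> \<pi> = {}"
    using assms by (simp add: Theta_set_def rank_def)
  then show ?thesis by (simp add: Uupper_def bot_ereal_def)
qed

lemma many_bad_resamples_if_Uupper_gt:
  assumes "1 \<le> k" "k \<le> n"
    and "2 * card (deviating_blocks n k s (\<lambda>i. x i - \<mu>)) < k"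
    and "ereal (4 * s) < Uupper n k m r x \<alpha> \<pi> - ereal \<mu>"
  shows "r \<le> card {j \<in> {1..m-1}. \<not> good_resample n k s \<mu> x \<alpha> j}"
proof -
  have "ereal (\<mu> + 4 * s) < Sup (ereal ` Theta_set n k m r x \<alpha> \<pi>)"
    using assms(4) unfolding Uupper_def
    by (cases "Sup (ereal ` Theta_set n k m r x \<alpha> \<pi>)") (simp_all add: algebra_simps)
  then obtain \<theta> where "\<theta> \<in> Theta_set n k m r x \<alpha> \<pi>" and \<theta>: "\<mu> + 4 * s < \<theta>"
    by (auto simp: less_Sup_iff)
  then have "card {j \<in> {1..m-1}. good_resample n k s \<mu> x \<alpha> j} < m - r"
    using card_good_resamples_less_rank[OF assms(1,2) \<theta> assms(3), of m \<alpha> \<pi>]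
    by (simp add: Theta_set_def)
  moreover have "card {j \<in> {1..m-1}. good_resample n k s \<mu> x \<alpha> j}
      + card {j \<in> {1..m-1}. \<not> good_resample n k s \<mu> x \<alpha> j} = m - 1"
  proof -
    have "{j \<in> {1..m-1}. good_resample n k s \<mu> x \<alpha> j}
          \<union> {j \<in> {1..m-1}. \<not> good_resample n k s \<mu> x \<alpha> j} = {1..m-1}"
      by auto
    then show ?thesis by (subst card_Un_disjoint[symmetric]) auto
  qed
  ultimately show ?thesis by linarith
qed

section \<open>Concentration inequalities\<close>

lemma integral_comp_eq_if_distr_eq:
  fixes X Y :: "'a \<Rightarrow> real" and g :: "real \<Rightarrow> real"
  assumes "distr M borel X = distr M borel Y" "X \<in> borel_measurable M" "Y \<in> borel_measurable M"
    and "g \<in> borel_measurable borel"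
  shows "(\<integral>\<omega>. g (X \<omega>) \<partial>M) = (\<integral>\<omega>. g (Y \<omega>) \<partial>M)"
    and "integrable M (\<lambda>\<omega>. g (X \<omega>)) \<longleftrightarrow> integrable M (\<lambda>\<omega>. g (Y \<omega>))"
  using integral_distr[OF assms(2,4)] integral_distr[OF assms(3,4)]
    integrable_distr_eq[OF assms(2,4)] integrable_distr_eq[OF assms(3,4)] assms(1)
  by metis+

lemma (in prob_space) indep_vars_restrict_compose:
  fixes F :: "'t \<Rightarrow> 'a \<Rightarrow> real" and Z :: "'g \<Rightarrow> 'a \<Rightarrow> real"
  assumes "indep_vars (\<lambda>_. borel) F I" "\<And>g. g \<in> G \<Longrightarrow> K g \<subseteq> I" "disjoint_family_on K G"
    and "\<And>g. g \<in> G \<Longrightarrow> h g \<in> borel_measurable (PiM (K g) (\<lambda>_. borel))"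
    and "\<And>g \<omega>. g \<in> G \<Longrightarrow> Z g \<omega> = h g (restrict (\<lambda>t. F t \<omega>) (K g))"
  shows "indep_vars (\<lambda>_. borel) Z G"
proof -
  have "indep_vars (\<lambda>_. borel) (\<lambda>g \<omega>. h g (restrict (\<lambda>t. F t \<omega>) (K g))) G"
    using indep_vars_restrict[OF assms(1-3)] assms(4) by (rule indep_vars_compose2)
  then show ?thesis
    by (rule indep_vars_cong[THEN iffD1, rotated 3]) (simp_all add: assms(5) fun_eq_iff)
qed

lemma (in prob_space) prob_half_of_indep_events_le:
  fixes P :: "'i \<Rightarrow> 'a \<Rightarrow> bool"
  assumes "finite L" "L \<noteq> {}"
    and indep: "indep_vars (\<lambda>_. borel) (\<lambda>l \<omega>. of_bool (P l \<omega>) :: real) L"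
    and prob: "\<And>l. l \<in> L \<Longrightarrow> prob {\<omega> \<in> space M. P l \<omega>} \<le> 1 / 4"
  shows "prob {\<omega> \<in> space M. card L \<le> 2 * card {l \<in> L. P l \<omega>}} \<le> exp (- real (card L) / 8)"
proof -
  let ?Z = "\<lambda>l \<omega>. of_bool (P l \<omega>) :: real"
  interpret H: Hoeffding_ineq M L ?Z "\<lambda>_. 0" "\<lambda>_. 1" "\<Sum>l\<in>L. expectation (?Z l)"
    by unfold_locales (use assms(1) indep in auto)
  have [measurable]: "?Z l \<in> borel_measurable M" if "l \<in> L" for l
    using indep that by (simp add: indep_vars_def)
  have events: "{\<omega> \<in> space M. P l \<omega>} \<in> events" if "l \<in> L" for l
  proof -
    have "{\<omega> \<in> space M. ?Z l \<omega> = 1} \<in> events" using that by measurable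
    then show ?thesis by simp
  qed
  have "expectation (?Z l) = prob {\<omega> \<in> space M. P l \<omega>}" if "l \<in> L" for l
  proof -
    have "expectation (?Z l) = expectation (indicator {\<omega> \<in> space M. P l \<omega>})"
      by (rule Bochner_Integration.integral_cong[OF refl]) (auto simp: indicator_def)
    then show ?thesis using events[OF that] by simp
  qed
  then have mean: "(\<Sum>l\<in>L. expectation (?Z l)) \<le> real (card L) / 4"
    using sum_mono[of L "\<lambda>l. expectation (?Z l)" "\<lambda>_. 1 / 4"] prob by simp
  have "prob {\<omega> \<in> space M. card L \<le> 2 * card {l \<in> L. P l \<omega>}}
        \<le> prob {\<omega> \<in> space M. (\<Sum>l\<in>L. ?Z l \<omega>) \<ge> (\<Sum>l\<in>L. expectation (?Z l)) + real (card L) / 4}"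
  proof (rule finite_measure_mono)
    show "{\<omega> \<in> space M. (\<Sum>l\<in>L. ?Z l \<omega>) \<ge> (\<Sum>l\<in>L. expectation (?Z l)) + real (card L) / 4}
          \<in> events"
      by measurable
  qed (use mean assms(1) in \<open>auto simp: Int_def conj_commute\<close>)
  also have "\<dots> \<le> exp (-2 * (real (card L) / 4)\<^sup>2 / (\<Sum>l\<in>L. (1 - 0)\<^sup>2))"
    using assms(1,2) by (intro H.Hoeffding_ineq_ge) auto
  also have "\<dots> = exp (- real (card L) / 8)"
    using assms(1,2) by (simp add: power2_eq_square)
  finally show ?thesis .
qed

lemma (in prob_space) prob_rademacher_sum_gt_half_le:
  assumes "finite B" "B \<noteq> {}"
    and indep: "indep_vars (\<lambda>_. borel) \<epsilon> B"
    and signs: "\<And>i \<omega>. i \<in> B \<Longrightarrow> \<omega> \<in> space M \<Longrightarrow> \<epsilon> i \<omega> \<in> {-1, 1}"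
    and centred: "\<And>i. i \<in> B \<Longrightarrow> expectation (\<epsilon> i) = 0"
  shows "prob {\<omega> \<in> space M. real (card B) < 2 * (\<Sum>i\<in>B. \<epsilon> i \<omega>)} \<le> exp (- real (card B) / 8)"
proof -
  interpret H: Hoeffding_ineq M B \<epsilon> "\<lambda>_. -1" "\<lambda>_. 1" "\<Sum>i\<in>B. expectation (\<epsilon> i)"
  proof unfold_locales
    fix i assume "i \<in> B"
    then show "AE \<omega> in M. \<epsilon> i \<omega> \<in> {-1..1}" using signs by (intro AE_I2) fastforce
  qed (use assms(1) indep in auto)
  have [measurable]: "\<epsilon> i \<in> borel_measurable M" if "i \<in> B" for i
    using indep that by (simp add: indep_vars_def)
  have "prob {\<omega> \<in> space M. real (card B) < 2 * (\<Sum>i\<in>B. \<epsilon> i \<omega>)}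
        \<le> prob {\<omega> \<in> space M. (\<Sum>i\<in>B. \<epsilon> i \<omega>) \<ge> (\<Sum>i\<in>B. expectation (\<epsilon> i)) + real (card B) / 2}"
  proof (rule finite_measure_mono)
    show "{\<omega> \<in> space M. (\<Sum>i\<in>B. \<epsilon> i \<omega>) \<ge> (\<Sum>i\<in>B. expectation (\<epsilon> i)) + real (card B) / 2}
          \<in> events"
      by measurable
  qed (use centred in auto)
  also have "\<dots> \<le> exp (-2 * (real (card B) / 2)\<^sup>2 / (\<Sum>i\<in>B. (1 - (-1))\<^sup>2))"
    using assms(1,2) by (intro H.Hoeffding_ineq_ge) auto
  also have "\<dots> = exp (- real (card B) / 8)"
    using assms(1,2) by (simp add: power2_eq_square)
  finally show ?thesis .
qed

lemma (in prob_space) prob_card_events_ge_le: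
  fixes r :: nat and P :: "'i \<Rightarrow> 'a \<Rightarrow> bool"
  assumes "finite J" and events: "\<And>j. j \<in> J \<Longrightarrow> {\<omega> \<in> space M. P j \<omega>} \<in> events"
    and prob: "\<And>j. j \<in> J \<Longrightarrow> prob {\<omega> \<in> space M. P j \<omega>} \<le> p" and "0 < r"
  shows "prob {\<omega> \<in> space M. r \<le> card {j \<in> J. P j \<omega>}} \<le> real (card J) * p / r"
proof -
  define C where "C \<omega> = (\<Sum>j\<in>J. indicator {\<omega> \<in> space M. P j \<omega>} \<omega> :: real)" for \<omega>
  have C: "C \<omega> = real (card {j \<in> J. P j \<omega>})" if "\<omega> \<in> space M" for \<omega>
    using assms(1) that by (simp add: C_def indicator_def of_bool_def[symmetric] Int_def conj_commute)
  have int: "integrable M C"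
    unfolding C_def using events
    by (intro Bochner_Integration.integrable_sum integrable_real_indicator) (auto simp: emeasure_eq_measure)
  have "prob {\<omega> \<in> space M. r \<le> card {j \<in> J. P j \<omega>}} = prob {\<omega> \<in> space M. real r \<le> C \<omega>}"
    by (rule arg_cong[where f = prob]) (auto simp: C)
  also have "\<dots> \<le> expectation C / r"
  proof (rule integral_Markov_inequality_measure[where A = "space M"])
    show "AE \<omega> in M. 0 \<le> C \<omega>" by (simp add: C_def sum_nonneg)
  qed (use int assms(4) in auto)
  also have "expectation C = (\<Sum>j\<in>J. prob {\<omega> \<in> space M. P j \<omega>})"
    unfolding C_def using events
    by (subst Bochner_Integration.integral_sum) (auto intro!: integrable_real_indicator simp: emeasure_eq_measure)
  also have "\<dots> \<le> real (card J) * p"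
    using sum_mono[of J "\<lambda>j. prob {\<omega> \<in> space M. P j \<omega>}" "\<lambda>_. p"] prob by simp
  finally show ?thesis using assms(4) by (simp add: divide_right_mono)
qed

lemma (in prob_space) events_card_ge:
  fixes J :: "nat set"
  assumes "\<And>j. j \<in> J \<Longrightarrow> {\<omega> \<in> space M. P j \<omega>} \<in> events"
  shows "{\<omega> \<in> space M. r \<le> card {j \<in> J. P j \<omega>}} \<in> events"
proof -
  have [measurable]: "(\<lambda>\<omega>. card {j \<in> J. P j \<omega>}) \<in> measurable M (count_space UNIV)"
  proof (rule measurable_card)
    fix i show "{\<omega> \<in> space M. i \<in> {j \<in> J. P j \<omega>}} \<in> events"
      using assms[of i] by (cases "i \<in> J") auto
  qed
  show ?thesis by measurable
qed

definition truncate :: "real \<Rightarrow> real \<Rightarrow> real" where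
  "truncate L w = (if \<bar>w\<bar> \<le> L then w else 0)"

lemma borel_measurable_truncate [measurable]: "truncate L \<in> borel_measurable borel"
  unfolding truncate_def by measurable

lemma abs_truncate_le: "0 \<le> L \<Longrightarrow> \<bar>truncate L w\<bar> \<le> L"
  by (simp add: truncate_def)

lemma truncate_uminus: "truncate L (- w) = - truncate L w"
  by (simp add: truncate_def)

lemma (in prob_space) prob_some_abs_gt_le:
  fixes W :: "'i \<Rightarrow> 'a \<Rightarrow> real"
  assumes "finite B" and meas: "\<And>i. i \<in> B \<Longrightarrow> W i \<in> borel_measurable M"
    and "0 < L" "0 < p"
    and intp: "\<And>i. i \<in> B \<Longrightarrow> integrable M (\<lambda>\<omega>. \<bar>W i \<omega>\<bar> powr p)"
    and mom: "\<And>i. i \<in> B \<Longrightarrow> expectation (\<lambda>\<omega>. \<bar>W i \<omega>\<bar> powr p) \<le> Mo"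
  shows "prob (\<Union>i\<in>B. {\<omega> \<in> space M. L < \<bar>W i \<omega>\<bar>}) \<le> real (card B) * Mo / L powr p"
proof -
  have "prob (\<Union>i\<in>B. {\<omega> \<in> space M. L < \<bar>W i \<omega>\<bar>}) \<le> (\<Sum>i\<in>B. prob {\<omega> \<in> space M. L < \<bar>W i \<omega>\<bar>})"
    using assms(1) meas by (intro measure_UNION_le) auto
  also have "\<dots> \<le> (\<Sum>i\<in>B. Mo / L powr p)"
  proof (rule sum_mono)
    fix i assume i: "i \<in> B"
    note [measurable] = meas[OF i]
    have "prob {\<omega> \<in> space M. L < \<bar>W i \<omega>\<bar>} \<le> prob {\<omega> \<in> space M. L powr p \<le> \<bar>W i \<omega>\<bar> powr p}"
      using assms(3,4) by (intro finite_measure_mono) (auto intro: powr_mono2)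
    also have "\<dots> \<le> expectation (\<lambda>\<omega>. \<bar>W i \<omega>\<bar> powr p) / L powr p"
      using intp[OF i] assms(3) by (intro integral_Markov_inequality_measure[where A = "space M"]) auto
    also have "\<dots> \<le> Mo / L powr p"
      using mom[OF i] by (simp add: divide_right_mono)
    finally show "prob {\<omega> \<in> space M. L < \<bar>W i \<omega>\<bar>} \<le> Mo / L powr p" .
  qed
  finally show ?thesis by simp
qed

lemma square_le_powr_mult:
  fixes w L a :: real
  assumes "\<bar>w\<bar> \<le> L" "0 < a" "a \<le> 1"
  shows "w\<^sup>2 \<le> L powr (1 - a) * \<bar>w\<bar> powr (1 + a)"
proof (cases "w = 0")
  case False
  then have "w\<^sup>2 = \<bar>w\<bar> powr (1 - a) * \<bar>w\<bar> powr (1 + a)"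
    by (simp add: powr_add[symmetric] powr_numeral[symmetric])
  also have "\<dots> \<le> L powr (1 - a) * \<bar>w\<bar> powr (1 + a)"
    using assms by (intro mult_right_mono powr_mono2) auto
  finally show ?thesis .
qed (use assms in simp)

lemma (in prob_space) expectation_square_sum_indep:
  fixes T :: "'i \<Rightarrow> 'a \<Rightarrow> real"
  assumes "finite B" and indep: "indep_vars (\<lambda>_. borel) T B"
    and bounded: "\<And>i \<omega>. i \<in> B \<Longrightarrow> \<bar>T i \<omega>\<bar> \<le> C"
    and centred: "\<And>i. i \<in> B \<Longrightarrow> expectation (T i) = 0"
  shows "expectation (\<lambda>\<omega>. (\<Sum>i\<in>B. T i \<omega>)\<^sup>2) = (\<Sum>i\<in>B. expectation (\<lambda>\<omega>. (T i \<omega>)\<^sup>2))"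
proof -
  have [measurable]: "T i \<in> borel_measurable M" if "i \<in> B" for i
    using indep that by (simp add: indep_vars_def)
  have int: "integrable M (T i)" if "i \<in> B" for i
    using bounded that by (intro integrable_const_bound[where B = C]) auto
  have int2: "integrable M (\<lambda>\<omega>. T i \<omega> * T j \<omega>)" if "i \<in> B" "j \<in> B" for i j
  proof (rule integrable_const_bound[where B = "C * C"])
    show "AE \<omega> in M. norm (T i \<omega> * T j \<omega>) \<le> C * C"
      using bounded[OF that(1)] bounded[OF that(2)] by (intro AE_I2) (simp add: abs_mult mult_mono')
  qed (use that in measurable)
  have cross: "expectation (\<lambda>\<omega>. T i \<omega> * T j \<omega>) = 0" if "i \<in> B" "j \<in> B" "i \<noteq> j" for i j
  proof -
    have "expectation (\<lambda>\<omega>. \<Prod>l\<in>{i, j}. T l \<omega>) = (\<Prod>l\<in>{i, j}. expectation (T l))"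
      using that int by (intro indep_vars_lebesgue_integral indep_vars_subset[OF indep]) auto
    then show ?thesis using that centred by simp
  qed
  have "expectation (\<lambda>\<omega>. (\<Sum>i\<in>B. T i \<omega>)\<^sup>2) = (\<Sum>i\<in>B. \<Sum>j\<in>B. expectation (\<lambda>\<omega>. T i \<omega> * T j \<omega>))"
    using int2 by (simp add: power2_eq_square sum_product Bochner_Integration.integral_sum
        Bochner_Integration.integrable_sum)
  also have "\<dots> = (\<Sum>i\<in>B. expectation (\<lambda>\<omega>. T i \<omega> * T i \<omega>))"
  proof (rule sum.cong[OF refl])
    fix i assume i: "i \<in> B"
    have "(\<Sum>j\<in>B - {i}. expectation (\<lambda>\<omega>. T i \<omega> * T j \<omega>)) = 0"
      using cross i by (intro sum.neutral) auto
    then show "(\<Sum>j\<in>B. expectation (\<lambda>\<omega>. T i \<omega> * T j \<omega>)) = expectation (\<lambda>\<omega>. T i \<omega> * T i \<omega>)"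
      using assms(1) i by (simp add: sum.remove[of B i])
  qed
  finally show ?thesis by (simp add: power2_eq_square)
qed

lemma (in prob_space) expectation_truncate_square_le:
  fixes W :: "'a \<Rightarrow> real"
  assumes [measurable]: "W \<in> borel_measurable M"
    and L: "0 < L" and a: "0 < a" "a \<le> 1"
    and intp: "integrable M (\<lambda>\<omega>. \<bar>W \<omega>\<bar> powr (1 + a))"
  shows "expectation (\<lambda>\<omega>. (truncate L (W \<omega>))\<^sup>2) \<le> L powr (1 - a) * expectation (\<lambda>\<omega>. \<bar>W \<omega>\<bar> powr (1 + a))"
proof -
  have bounded: "\<bar>truncate L (W \<omega>)\<bar> \<le> L" for \<omega>
    using L by (simp add: abs_truncate_le)
  have "expectation (\<lambda>\<omega>. (truncate L (W \<omega>))\<^sup>2) \<le> expectation (\<lambda>\<omega>. L powr (1 - a) * \<bar>W \<omega>\<bar> powr (1 + a))"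
  proof (rule integral_mono)
    show "integrable M (\<lambda>\<omega>. (truncate L (W \<omega>))\<^sup>2)"
      using bounded by (intro integrable_const_bound[where B = "L\<^sup>2"])
        (auto simp: abs_le_square_iff[symmetric] intro!: AE_I2 order_trans[OF _ abs_ge_self])
    show "(truncate L (W \<omega>))\<^sup>2 \<le> L powr (1 - a) * \<bar>W \<omega>\<bar> powr (1 + a)" for \<omega>
      using square_le_powr_mult[OF bounded a, of \<omega>] by (auto simp: truncate_def)
  qed (use intp in simp)
  then show ?thesis by simp
qed

lemma (in prob_space) prob_abs_sum_truncate_ge_le:
  fixes W :: "'i \<Rightarrow> 'a \<Rightarrow> real"
  assumes "finite B" and indep: "indep_vars (\<lambda>_. borel) W B"
    and a: "0 < a" "a \<le> 1" and L: "0 < L"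
    and intp: "\<And>i. i \<in> B \<Longrightarrow> integrable M (\<lambda>\<omega>. \<bar>W i \<omega>\<bar> powr (1 + a))"
    and mom: "\<And>i. i \<in> B \<Longrightarrow> expectation (\<lambda>\<omega>. \<bar>W i \<omega>\<bar> powr (1 + a)) \<le> Mo"
    and centred: "\<And>i. i \<in> B \<Longrightarrow> expectation (\<lambda>\<omega>. truncate L (W i \<omega>)) = 0"
  shows "prob {\<omega> \<in> space M. L \<le> \<bar>\<Sum>i\<in>B. truncate L (W i \<omega>)\<bar>} \<le> real (card B) * Mo / L powr (1 + a)"
proof -
  let ?T = "\<lambda>i \<omega>. truncate L (W i \<omega>)"
  have [measurable]: "W i \<in> borel_measurable M" if "i \<in> B" for i
    using indep that by (simp add: indep_vars_def)
  have bounded: "\<bar>?T i \<omega>\<bar> \<le> L" for i \<omega>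
    using L by (simp add: abs_truncate_le)
  have "expectation (\<lambda>\<omega>. (\<Sum>i\<in>B. ?T i \<omega>)\<^sup>2) = (\<Sum>i\<in>B. expectation (\<lambda>\<omega>. (?T i \<omega>)\<^sup>2))"
    using assms(1) indep_vars_compose2[OF indep borel_measurable_truncate] bounded centred
    by (rule expectation_square_sum_indep)
  also have "\<dots> \<le> (\<Sum>i\<in>B. L powr (1 - a) * Mo)"
  proof (rule sum_mono)
    fix i assume i: "i \<in> B"
    have "expectation (\<lambda>\<omega>. (?T i \<omega>)\<^sup>2) \<le> L powr (1 - a) * expectation (\<lambda>\<omega>. \<bar>W i \<omega>\<bar> powr (1 + a))"
      using i L a intp[OF i] by (intro expectation_truncate_square_le) auto
    also have "\<dots> \<le> L powr (1 - a) * Mo"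
      using mom[OF i] by (simp add: mult_left_mono)
    finally show "expectation (\<lambda>\<omega>. (?T i \<omega>)\<^sup>2) \<le> L powr (1 - a) * Mo" .
  qed
  finally have second_moment: "expectation (\<lambda>\<omega>. (\<Sum>i\<in>B. ?T i \<omega>)\<^sup>2) \<le> real (card B) * (L powr (1 - a) * Mo)"
    by simp
  have "prob {\<omega> \<in> space M. L \<le> \<bar>\<Sum>i\<in>B. ?T i \<omega>\<bar>} \<le> expectation (\<lambda>\<omega>. (\<Sum>i\<in>B. ?T i \<omega>)\<^sup>2) / L\<^sup>2"
  proof (rule second_moment_method)
    have "\<bar>\<Sum>i\<in>B. ?T i \<omega>\<bar> \<le> real (card B) * L" for \<omega>
      using order_trans[OF sum_abs sum_mono[of B "\<lambda>i. \<bar>?T i \<omega>\<bar>" "\<lambda>_. L"]] bounded by simp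
    then show "integrable M (\<lambda>\<omega>. (\<Sum>i\<in>B. ?T i \<omega>)\<^sup>2)"
      by (intro integrable_const_bound[where B = "(real (card B) * L)\<^sup>2"])
        (auto simp: abs_le_square_iff[symmetric] intro!: AE_I2 order_trans[OF _ abs_ge_self])
  qed (use L in auto)
  also have "\<dots> \<le> real (card B) * (L powr (1 - a) * Mo) / L\<^sup>2"
    using second_moment by (simp add: divide_right_mono)
  also have "\<dots> = real (card B) * Mo / L powr (1 + a)"
  proof -
    have "L powr (1 - a) * L powr (1 + a) = L powr 2"
      by (simp add: powr_add[symmetric])
    then have "L\<^sup>2 = L powr (1 - a) * L powr (1 + a)"
      using L by (simp add: powr_numeral)
    then show ?thesis using L by simp
  qed
  finally show ?thesis .
qed

lemma (in prob_space) prob_abs_sum_ge_le: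
  fixes W :: "'i \<Rightarrow> 'a \<Rightarrow> real"
  assumes "finite B" and indep: "indep_vars (\<lambda>_. borel) W B"
    and a: "0 < a" "a \<le> 1" and L: "0 < L"
    and intp: "\<And>i. i \<in> B \<Longrightarrow> integrable M (\<lambda>\<omega>. \<bar>W i \<omega>\<bar> powr (1 + a))"
    and mom: "\<And>i. i \<in> B \<Longrightarrow> expectation (\<lambda>\<omega>. \<bar>W i \<omega>\<bar> powr (1 + a)) \<le> Mo"
    and centred: "\<And>i. i \<in> B \<Longrightarrow> expectation (\<lambda>\<omega>. truncate L (W i \<omega>)) = 0"
  shows "prob {\<omega> \<in> space M. L \<le> \<bar>\<Sum>i\<in>B. W i \<omega>\<bar>} \<le> 2 * real (card B) * Mo / L powr (1 + a)"
proof -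
  let ?Large = "\<Union>i\<in>B. {\<omega> \<in> space M. L < \<bar>W i \<omega>\<bar>}"
  let ?Trunc = "{\<omega> \<in> space M. L \<le> \<bar>\<Sum>i\<in>B. truncate L (W i \<omega>)\<bar>}"
  have meas [measurable]: "W i \<in> borel_measurable M" if "i \<in> B" for i
    using indep that by (simp add: indep_vars_def)
  have "{\<omega> \<in> space M. L \<le> \<bar>\<Sum>i\<in>B. W i \<omega>\<bar>} \<subseteq> ?Large \<union> ?Trunc"
    by (auto simp: truncate_def not_less intro: sum.cong)
  moreover have "?Large \<in> events"
    using assms(1) by (intro sets.finite_UN) measurable
  moreover have "?Trunc \<in> events"
    by measurable
  ultimately have "prob {\<omega> \<in> space M. L \<le> \<bar>\<Sum>i\<in>B. W i \<omega>\<bar>} \<le> prob ?Large + prob ?Trunc"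
    by (meson finite_measure_mono measure_Un_le order_trans sets.Un)
  also have "\<dots> \<le> real (card B) * Mo / L powr (1 + a) + real (card B) * Mo / L powr (1 + a)"
    using a by (intro add_mono prob_some_abs_gt_le[OF assms(1) meas L _ intp mom]
        prob_abs_sum_truncate_ge_le[OF assms(1) indep a L intp mom centred]) auto
  finally show ?thesis by (simp add: field_simps)
qed

lemma (in prob_space) prob_block_deviates_le:
  fixes W :: "'i \<Rightarrow> 'a \<Rightarrow> real"
  assumes "finite B" "B \<noteq> {}" and indep: "indep_vars (\<lambda>_. borel) W B"
    and a: "0 < a" "a \<le> 1"
    and intp: "\<And>i. i \<in> B \<Longrightarrow> integrable M (\<lambda>\<omega>. \<bar>W i \<omega>\<bar> powr (1 + a))"
    and mom: "\<And>i. i \<in> B \<Longrightarrow> expectation (\<lambda>\<omega>. \<bar>W i \<omega>\<bar> powr (1 + a)) \<le> Mo"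
    and centred: "\<And>i c. i \<in> B \<Longrightarrow> expectation (\<lambda>\<omega>. truncate c (W i \<omega>)) = 0"
    and s: "0 \<le> s" and scale: "12 * Mo \<le> real (card B) powr a * s powr (1 + a)"
  shows "prob {\<omega> \<in> space M. real (card B) * s < \<bar>\<Sum>i\<in>B. W i \<omega>\<bar>} \<le> 1 / 6"
proof (cases "s = 0")
  case False
  define N where "N = real (card B)"
  have N: "0 < N" using assms(1,2) by (simp add: N_def card_gt_0_iff)
  have [measurable]: "W i \<in> borel_measurable M" if "i \<in> B" for i
    using indep that by (simp add: indep_vars_def)
  have "prob {\<omega> \<in> space M. N * s < \<bar>\<Sum>i\<in>B. W i \<omega>\<bar>} \<le> prob {\<omega> \<in> space M. N * s \<le> \<bar>\<Sum>i\<in>B. W i \<omega>\<bar>}"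
    by (rule finite_measure_mono) auto
  also have "\<dots> \<le> 2 * N * Mo / (N * s) powr (1 + a)"
    unfolding N_def using False s N
    by (intro prob_abs_sum_ge_le[OF assms(1) indep a _ intp mom centred]) (auto simp: N_def)
  also have "(N * s) powr (1 + a) = N * (N powr a * s powr (1 + a))"
    using N s by (simp add: powr_mult powr_add)
  also have "2 * N * Mo / (N * (N powr a * s powr (1 + a))) \<le> 1 / 6"
    using N s False scale by (simp add: N_def[symmetric] field_simps)
  finally show ?thesis by (simp add: N_def)
next
  case True
  have "AE \<omega> in M. \<bar>W i \<omega>\<bar> powr (1 + a) = 0" if "i \<in> B" for i
  proof -
    have "expectation (\<lambda>\<omega>. \<bar>W i \<omega>\<bar> powr (1 + a)) = 0"
      using mom[OF that] scale True a by (intro antisym) simp_all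
    then show ?thesis using integral_nonneg_eq_0_iff_AE[OF intp[OF that]] by simp
  qed
  then have "AE \<omega> in M. \<forall>i\<in>B. W i \<omega> = 0"
    by (subst AE_finite_all[OF assms(1)]) simp
  then have "AE \<omega> in M. \<not> real (card B) * s < \<bar>\<Sum>i\<in>B. W i \<omega>\<bar>"
    by eventually_elim (simp add: True)
  then show ?thesis by (simp add: prob_eq_0_AE)
qed

lemma borel_measurable_PiM_sum: "(\<lambda>f. \<Sum>i\<in>B. f i :: real) \<in> borel_measurable (PiM B (\<lambda>_. borel))"
  by (rule borel_measurable_sum[of B "\<lambda>i f. f i"]) (rule measurable_component_singleton)

lemma (in prob_space) prob_many_deviating_blocks_le:
  fixes W :: "nat \<Rightarrow> 'a \<Rightarrow> real"
  assumes k: "1 \<le> k" "k \<le> n" and indep: "indep_vars (\<lambda>_. borel) W {1..n}"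
    and a: "0 < a" "a \<le> 1"
    and intp: "\<And>i. i \<in> {1..n} \<Longrightarrow> integrable M (\<lambda>\<omega>. \<bar>W i \<omega>\<bar> powr (1 + a))"
    and mom: "\<And>i. i \<in> {1..n} \<Longrightarrow> expectation (\<lambda>\<omega>. \<bar>W i \<omega>\<bar> powr (1 + a)) \<le> Mo"
    and centred: "\<And>i c. i \<in> {1..n} \<Longrightarrow> expectation (\<lambda>\<omega>. truncate c (W i \<omega>)) = 0"
    and s: "0 \<le> s" and scale: "12 * Mo \<le> real (n div k) powr a * s powr (1 + a)"
  shows "prob {\<omega> \<in> space M. k \<le> 2 * card (deviating_blocks n k s (\<lambda>i. W i \<omega>))} \<le> exp (- real k / 8)"
proof -
  let ?P = "\<lambda>l \<omega>. real (card (block n k l)) * s < \<bar>\<Sum>i\<in>block n k l. W i \<omega>\<bar>"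
  have "prob {\<omega> \<in> space M. card {1..k} \<le> 2 * card {l \<in> {1..k}. ?P l \<omega>}} \<le> exp (- real (card {1..k}) / 8)"
  proof (rule prob_half_of_indep_events_le)
    show "indep_vars (\<lambda>_. borel) (\<lambda>l \<omega>. of_bool (?P l \<omega>) :: real) {1..k}"
    proof (rule indep_vars_restrict_compose[OF indep block_subset disjoint_family_block])
      fix l
      show "(\<lambda>f. of_bool (real (card (block n k l)) * s < \<bar>\<Sum>i\<in>block n k l. f i\<bar>) :: real)
            \<in> borel_measurable (PiM (block n k l) (\<lambda>_. borel))"
        using borel_measurable_PiM_sum[of "block n k l"] by measurable
    qed simp
    fix l assume l: "l \<in> {1..k}"
    have "real (n div k) powr a \<le> real (card (block n k l)) powr a"
      using card_block_ge[OF k(1) l, of n] a by (intro powr_mono2) auto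
    then have "12 * Mo \<le> real (card (block n k l)) powr a * s powr (1 + a)"
      using scale by (meson mult_right_mono order_trans powr_ge_zero)
    moreover have "block n k l \<noteq> {}"
      using card_block_pos[OF k l] by auto
    moreover have "i \<in> {1..n}" if "i \<in> block n k l" for i
      using block_subset that by blast
    ultimately have "prob {\<omega> \<in> space M. ?P l \<omega>} \<le> 1 / 6"
      using s
      by (intro prob_block_deviates_le[OF finite_block _ indep_vars_subset[OF indep block_subset] a])
        (simp_all add: intp mom centred)
    then show "prob {\<omega> \<in> space M. ?P l \<omega>} \<le> 1 / 4" by simp
  qed (use k in auto)
  then show ?thesis by (simp add: deviating_blocks_def)
qed

lemma (in prob_space) prob_unbalanced_block_le:
  assumes k: "1 \<le> k" "k \<le> n" and indep: "indep_vars (\<lambda>_. borel) \<epsilon> {1..n}"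
    and signs: "\<And>i \<omega>. i \<in> {1..n} \<Longrightarrow> \<omega> \<in> space M \<Longrightarrow> \<epsilon> i \<omega> \<in> {-1, 1}"
    and centred: "\<And>i. i \<in> {1..n} \<Longrightarrow> expectation (\<epsilon> i) = 0"
  shows "prob {\<omega> \<in> space M. \<exists>l\<in>{1..k}. real (card (block n k l)) < 2 * (\<Sum>i\<in>block n k l. \<epsilon> i \<omega>)}
         \<le> real k * exp (- real (n div k) / 8)"
proof -
  have [measurable]: "\<epsilon> i \<in> borel_measurable M" if "i \<in> block n k l" for i l
    using indep block_subset[of n k l] that by (auto simp: indep_vars_def)
  have "prob {\<omega> \<in> space M. \<exists>l\<in>{1..k}. real (card (block n k l)) < 2 * (\<Sum>i\<in>block n k l. \<epsilon> i \<omega>)}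
        = prob (\<Union>l\<in>{1..k}. {\<omega> \<in> space M. real (card (block n k l)) < 2 * (\<Sum>i\<in>block n k l. \<epsilon> i \<omega>)})"
    by (rule arg_cong[where f = prob]) auto
  also have "\<dots> \<le> (\<Sum>l\<in>{1..k}. prob {\<omega> \<in> space M. real (card (block n k l)) < 2 * (\<Sum>i\<in>block n k l. \<epsilon> i \<omega>)})"
    by (intro measure_UNION_le) measurable
  also have "\<dots> \<le> (\<Sum>l\<in>{1..k}. exp (- real (n div k) / 8))"
  proof (rule sum_mono)
    fix l assume l: "l \<in> {1..k}"
    have Bsub: "i \<in> {1..n}" if "i \<in> block n k l" for i
      using block_subset that by blast
    have "prob {\<omega> \<in> space M. real (card (block n k l)) < 2 * (\<Sum>i\<in>block n k l. \<epsilon> i \<omega>)}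
          \<le> exp (- real (card (block n k l)) / 8)"
    proof (rule prob_rademacher_sum_gt_half_le[OF finite_block _ indep_vars_subset[OF indep block_subset]])
      show "block n k l \<noteq> {}" using card_block_pos[OF k l] by auto
    qed (meson Bsub signs centred)+
    also have "\<dots> \<le> exp (- real (n div k) / 8)"
      using card_block_ge[OF k(1) l, of n] by simp
    finally show "prob {\<omega> \<in> space M. real (card (block n k l)) < 2 * (\<Sum>i\<in>block n k l. \<epsilon> i \<omega>)}
          \<le> exp (- real (n div k) / 8)" .
  qed
  finally show ?thesis by simp
qed

section \<open>The resampling model\<close>

lemma diff_one_le_mult_diff:
  fixes r m :: nat
  assumes "1 \<le> r" "r < m"
  shows "m - 1 \<le> r * (m - r)"
proof -
  define d where "d = m - r - 1"
  have "m - 1 = r + d" "m - r = Suc d"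
    using assms by (auto simp: d_def)
  moreover have "d \<le> r * d"
    using assms(1) by (cases r) auto
  ultimately show ?thesis by simp
qed

lemma powr_scale_cancel:
  fixes c q a :: real
  assumes "0 \<le> c" "0 < q" "0 < a"
  shows "q powr a * ((c powr (1 / a) / q) powr (a / (1 + a))) powr (1 + a) = c"
proof -
  have "((c powr (1 / a) / q) powr (a / (1 + a))) powr (1 + a) = (c powr (1 / a) / q) powr a"
    using assms(3) by (simp add: powr_powr)
  also have "\<dots> = c / q powr a"
    using assms by (simp add: powr_divide powr_powr)
  finally show ?thesis using assms(2) by simp
qed

locale mom_resampling = prob_space M for M :: "'w measure" +
  fixes X :: "nat \<Rightarrow> 'w \<Rightarrow> real" and \<alpha> :: "nat \<Rightarrow> nat \<Rightarrow> 'w \<Rightarrow> real"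
    and n m :: nat and \<mu> a Mom :: real
  assumes a: "0 < a" "a \<le> 1"
    and indep: "indep_vars (\<lambda>_. borel) (\<lambda>t. case t of Inl i \<Rightarrow> X i | Inr (i, j) \<Rightarrow> \<alpha> i j)
                  ({1..n} <+> ({1..n} \<times> {1..m-1}))"
    and ident: "\<And>i. i \<in> {1..n} \<Longrightarrow> distr M borel (X i) = distr M borel (X 1)"
    and symm: "distr M borel (\<lambda>\<omega>. X 1 \<omega> - \<mu>) = distr M borel (\<lambda>\<omega>. \<mu> - X 1 \<omega>)"
    and int1: "integrable M (X 1)"
    and intm: "integrable M (\<lambda>\<omega>. \<bar>X 1 \<omega> - expectation (X 1)\<bar> powr (1 + a))"
    and mom_eq: "expectation (\<lambda>\<omega>. \<bar>X 1 \<omega> - expectation (X 1)\<bar> powr (1 + a)) = Mom"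
    and rad_val: "\<And>i j \<omega>. i \<in> {1..n} \<Longrightarrow> j \<in> {1..m-1} \<Longrightarrow> \<omega> \<in> space M \<Longrightarrow> \<alpha> i j \<omega> \<in> {-1, 1}"
    and rad_prob: "\<And>i j. i \<in> {1..n} \<Longrightarrow> j \<in> {1..m-1} \<Longrightarrow> prob {\<omega> \<in> space M. \<alpha> i j \<omega> = 1} = 1 / 2"
begin

abbreviation "F \<equiv> \<lambda>t. case t of Inl i \<Rightarrow> X i | Inr (i, j) \<Rightarrow> \<alpha> i j"
abbreviation "I \<equiv> {1..n} <+> ({1..n} \<times> {1..m-1})"

lemma X_measurable [measurable]: "i \<in> {1..n} \<Longrightarrow> X i \<in> borel_measurable M"
proof -
  assume "i \<in> {1..n}"
  then have "Inl i \<in> I" by auto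
  then have "F (Inl i) \<in> borel_measurable M" using indep unfolding indep_vars_def by blast
  then show ?thesis by simp
qed

lemma \<alpha>_measurable [measurable]: "i \<in> {1..n} \<Longrightarrow> j \<in> {1..m-1} \<Longrightarrow> \<alpha> i j \<in> borel_measurable M"
proof -
  assume "i \<in> {1..n}" "j \<in> {1..m-1}"
  then have "Inr (i, j) \<in> I" by auto
  then have "F (Inr (i, j)) \<in> borel_measurable M" using indep unfolding indep_vars_def by blast
  then show ?thesis by simp
qed

lemma X1_measurable [measurable]: "X 1 \<in> borel_measurable M"
  using int1 by auto

lemma X_measurable_block [measurable]: "i \<in> block n k l \<Longrightarrow> X i \<in> borel_measurable M"
  using X_measurable block_subset by blast

lemma \<alpha>_measurable_block [measurable]:
  "i \<in> block n k l \<Longrightarrow> j \<in> {1..m-1} \<Longrightarrow> \<alpha> i j \<in> borel_measurable M"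
  using \<alpha>_measurable block_subset by blast

lemma expectation_X1: "expectation (X 1) = \<mu>"
proof -
  have "expectation (\<lambda>\<omega>. X 1 \<omega> - \<mu>) = expectation (\<lambda>\<omega>. \<mu> - X 1 \<omega>)"
    by (rule integral_comp_eq_if_distr_eq(1)[OF symm, where g = "\<lambda>y. y"]) measurable
  then show ?thesis using int1 by (simp add: prob_space)
qed

lemma moment_X:
  assumes "i \<in> {1..n}"
  shows "integrable M (\<lambda>\<omega>. \<bar>X i \<omega> - \<mu>\<bar> powr (1 + a))"
    and "expectation (\<lambda>\<omega>. \<bar>X i \<omega> - \<mu>\<bar> powr (1 + a)) = Mom"
  using integral_comp_eq_if_distr_eq[OF ident[OF assms] X_measurable[OF assms] X1_measurable,
      of "\<lambda>y. \<bar>y - \<mu>\<bar> powr (1 + a)"] intm mom_eq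
  unfolding expectation_X1 by simp_all

lemma truncated_mean_X:
  assumes "i \<in> {1..n}"
  shows "expectation (\<lambda>\<omega>. truncate c (X i \<omega> - \<mu>)) = 0"
proof -
  have "expectation (\<lambda>\<omega>. truncate c (X i \<omega> - \<mu>)) = expectation (\<lambda>\<omega>. truncate c (X 1 \<omega> - \<mu>))"
    by (rule integral_comp_eq_if_distr_eq(1)[OF ident[OF assms] X_measurable[OF assms] X1_measurable,
        where g = "\<lambda>y. truncate c (y - \<mu>)"]) measurable
  moreover have "expectation (\<lambda>\<omega>. truncate c (X 1 \<omega> - \<mu>)) = expectation (\<lambda>\<omega>. truncate c (\<mu> - X 1 \<omega>))"
    by (rule integral_comp_eq_if_distr_eq(1)[OF symm, where g = "truncate c"]) measurable
  moreover have "expectation (\<lambda>\<omega>. truncate c (\<mu> - X 1 \<omega>)) = expectation (\<lambda>\<omega>. - truncate c (X 1 \<omega> - \<mu>))"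
    by (simp flip: truncate_uminus)
  ultimately show ?thesis by simp
qed

lemma expectation_\<alpha>:
  assumes "i \<in> {1..n}" "j \<in> {1..m-1}"
  shows "expectation (\<alpha> i j) = 0"
proof -
  have [measurable]: "{\<omega> \<in> space M. \<alpha> i j \<omega> = 1} \<in> events" using assms by measurable
  have "expectation (\<alpha> i j) = expectation (\<lambda>\<omega>. 2 * indicator {\<omega> \<in> space M. \<alpha> i j \<omega> = 1} \<omega> - 1 :: real)"
    by (rule Bochner_Integration.integral_cong[OF refl]) (use rad_val[OF assms] in \<open>fastforce simp: indicator_def\<close>)
  also have "\<dots> = 2 * prob {\<omega> \<in> space M. \<alpha> i j \<omega> = 1} - 1"
    by (subst Bochner_Integration.integral_diff)
       (auto simp: prob_space emeasure_eq_measure intro!: integrable_real_indicator)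
  finally show ?thesis using rad_prob[OF assms] by simp
qed

lemma indep_X_centred: "indep_vars (\<lambda>_. borel) (\<lambda>i \<omega>. X i \<omega> - \<mu>) {1..n}"
proof (rule indep_vars_restrict_compose[OF indep, where K = "\<lambda>i. {Inl i}" and h = "\<lambda>i f. f (Inl i) - \<mu>"])
  fix i :: nat
  show "(\<lambda>f. f (Inl i) - \<mu>) \<in> borel_measurable (PiM {Inl i} (\<lambda>_. borel))"
    using measurable_component_singleton[of "Inl i" "{Inl i}" "\<lambda>_. borel"] by measurable
qed (auto simp: disjoint_family_on_def)

lemma indep_\<alpha>:
  assumes "j \<in> {1..m-1}"
  shows "indep_vars (\<lambda>_. borel) (\<lambda>i. \<alpha> i j) {1..n}"
proof (rule indep_vars_restrict_compose[OF indep, where K = "\<lambda>i. {Inr (i, j)}" and h = "\<lambda>i f. f (Inr (i, j))"])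
  fix i :: nat
  show "(\<lambda>f. f (Inr (i, j))) \<in> borel_measurable (PiM {Inr (i, j)} (\<lambda>_. borel))"
    by (rule measurable_component_singleton) simp
qed (use assms in \<open>auto simp: disjoint_family_on_def\<close>)

lemma indep_\<alpha>X:
  assumes "j \<in> {1..m-1}"
  shows "indep_vars (\<lambda>_. borel) (\<lambda>i \<omega>. \<alpha> i j \<omega> * (X i \<omega> - \<mu>)) {1..n}"
proof (rule indep_vars_restrict_compose[OF indep, where K = "\<lambda>i. {Inl i, Inr (i, j)}"
      and h = "\<lambda>i f. f (Inr (i, j)) * (f (Inl i) - \<mu>)"])
  fix i :: nat
  show "(\<lambda>f. f (Inr (i, j)) * (f (Inl i) - \<mu>)) \<in> borel_measurable (PiM {Inl i, Inr (i, j)} (\<lambda>_. borel))"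
    using measurable_component_singleton[of "Inl i" "{Inl i, Inr (i, j)}" "\<lambda>_. borel"]
      measurable_component_singleton[of "Inr (i, j)" "{Inl i, Inr (i, j)}" "\<lambda>_. borel"]
    by measurable
qed (use assms in \<open>auto simp: disjoint_family_on_def\<close>)

lemma moment_\<alpha>X:
  assumes "i \<in> {1..n}" "j \<in> {1..m-1}"
  shows "integrable M (\<lambda>\<omega>. \<bar>\<alpha> i j \<omega> * (X i \<omega> - \<mu>)\<bar> powr (1 + a))"
    and "expectation (\<lambda>\<omega>. \<bar>\<alpha> i j \<omega> * (X i \<omega> - \<mu>)\<bar> powr (1 + a)) = Mom"
proof -
  have eq: "\<bar>\<alpha> i j \<omega> * (X i \<omega> - \<mu>)\<bar> powr (1 + a) = \<bar>X i \<omega> - \<mu>\<bar> powr (1 + a)" if "\<omega> \<in> space M" for \<omega>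
    using rad_val[OF assms that] by (auto simp: abs_mult)
  show "integrable M (\<lambda>\<omega>. \<bar>\<alpha> i j \<omega> * (X i \<omega> - \<mu>)\<bar> powr (1 + a))"
    using moment_X(1)[OF assms(1)] by (subst Bochner_Integration.integrable_cong[OF refl eq]) auto
  show "expectation (\<lambda>\<omega>. \<bar>\<alpha> i j \<omega> * (X i \<omega> - \<mu>)\<bar> powr (1 + a)) = Mom"
    using moment_X(2)[OF assms(1)] by (subst Bochner_Integration.integral_cong[OF refl eq]) auto
qed

lemma truncated_mean_\<alpha>X:
  assumes i: "i \<in> {1..n}" and j: "j \<in> {1..m-1}"
  shows "expectation (\<lambda>\<omega>. truncate c (\<alpha> i j \<omega> * (X i \<omega> - \<mu>))) = 0"
proof -
  define G where "G t = (case t of Inl i \<Rightarrow> (\<lambda>\<omega>. truncate c (X i \<omega> - \<mu>)) | Inr (i, j) \<Rightarrow> \<alpha> i j)" for t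
  have abs_\<alpha>: "\<bar>\<alpha> i j \<omega>\<bar> = 1" if "\<omega> \<in> space M" for \<omega>
    using rad_val[OF i j that] by auto
  have "indep_vars (\<lambda>_. borel) (\<lambda>t \<omega>. (case t of Inl _ \<Rightarrow> (\<lambda>y. truncate c (y - \<mu>)) | Inr _ \<Rightarrow> (\<lambda>y. y)) (F t \<omega>))
          {Inl i, Inr (i, j)}"
    using i j by (intro indep_vars_compose2[OF indep_vars_subset[OF indep]]) (auto split: sum.split)
  then have indep_G: "indep_vars (\<lambda>_. borel) G {Inl i, Inr (i, j)}"
    by (rule indep_vars_cong[THEN iffD1, rotated 3]) (auto simp: G_def fun_eq_iff)
  have "integrable M (G t)" if "t \<in> {Inl i, Inr (i, j)}" for t
  proof (rule integrable_const_bound[where B = "max \<bar>c\<bar> 1"])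
    show "AE \<omega> in M. norm (G t \<omega>) \<le> max \<bar>c\<bar> 1"
      using that abs_\<alpha> by (intro AE_I2) (auto simp: G_def truncate_def)
  qed (use that i j in \<open>auto simp: G_def\<close>)
  then have "expectation (\<lambda>\<omega>. \<Prod>t\<in>{Inl i, Inr (i, j)}. G t \<omega>) = (\<Prod>t\<in>{Inl i, Inr (i, j)}. expectation (G t))"
    using indep_G by (intro indep_vars_lebesgue_integral) auto
  then have "expectation (\<lambda>\<omega>. truncate c (X i \<omega> - \<mu>) * \<alpha> i j \<omega>) = 0"
    using expectation_\<alpha>[OF i j] by (simp add: G_def)
  moreover have "expectation (\<lambda>\<omega>. truncate c (\<alpha> i j \<omega> * (X i \<omega> - \<mu>)))
      = expectation (\<lambda>\<omega>. truncate c (X i \<omega> - \<mu>) * \<alpha> i j \<omega>)"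
    by (rule Bochner_Integration.integral_cong[OF refl]) (auto simp: truncate_def abs_mult dest!: rad_val[OF i j])
  ultimately show ?thesis by simp
qed

lemma prob_many_deviating_X_le:
  assumes "1 \<le> k" "k \<le> n" "0 \<le> s" "12 * Mom \<le> real (n div k) powr a * s powr (1 + a)"
  shows "prob {\<omega> \<in> space M. k \<le> 2 * card (deviating_blocks n k s (\<lambda>i. X i \<omega> - \<mu>))} \<le> exp (- real k / 8)"
  using moment_X truncated_mean_X
  by (intro prob_many_deviating_blocks_le[OF assms(1,2) indep_X_centred a _ _ _ assms(3,4)]) simp_all

lemma prob_bad_resample_le:
  assumes k: "1 \<le> k" "k \<le> n" and s: "0 \<le> s" "12 * Mom \<le> real (n div k) powr a * s powr (1 + a)"
    and j: "j \<in> {1..m-1}"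
  shows "prob {\<omega> \<in> space M. \<not> good_resample n k s \<mu> (\<lambda>i. X i \<omega>) (\<lambda>i j. \<alpha> i j \<omega>) j}
         \<le> real k * exp (- real (n div k) / 8) + exp (- real k / 8)"
proof -
  let ?Unbalanced = "{\<omega> \<in> space M. \<exists>l\<in>{1..k}. real (card (block n k l)) < 2 * (\<Sum>i\<in>block n k l. \<alpha> i j \<omega>)}"
  let ?Deviating = "{\<omega> \<in> space M. k \<le> 2 * card (deviating_blocks n k s (\<lambda>i. \<alpha> i j \<omega> * (X i \<omega> - \<mu>)))}"
  have "prob {\<omega> \<in> space M. \<not> good_resample n k s \<mu> (\<lambda>i. X i \<omega>) (\<lambda>i j. \<alpha> i j \<omega>) j}
        = prob (?Unbalanced \<union> ?Deviating)"
    by (rule arg_cong[where f = prob]) (auto simp: good_resample_def not_le not_less)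
  also have "\<dots> \<le> prob ?Unbalanced + prob ?Deviating"
    using j by (intro measure_Un_le) (measurable, simp add: deviating_blocks_def)
  also have "prob ?Unbalanced \<le> real k * exp (- real (n div k) / 8)"
    using rad_val j expectation_\<alpha> j
    by (intro prob_unbalanced_block_le[OF k indep_\<alpha>[OF j]]) auto
  also have "prob ?Deviating \<le> exp (- real k / 8)"
    using moment_\<alpha>X[OF _ j] truncated_mean_\<alpha>X[OF _ j]
    by (intro prob_many_deviating_blocks_le[OF k indep_\<alpha>X[OF j] a _ _ _ s]) simp_all
  finally show ?thesis by simp
qed

lemma bad_resample_event:
  "j \<in> {1..m-1} \<Longrightarrow> {\<omega> \<in> space M. \<not> good_resample n k s \<mu> (\<lambda>i. X i \<omega>) (\<lambda>i j. \<alpha> i j \<omega>) j} \<in> events"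
  unfolding good_resample_def deviating_blocks_def by measurable

lemma prob_many_bad_resamples_le:
  assumes k: "1 \<le> k" "k \<le> n" and s: "0 \<le> s" "12 * Mom \<le> real (n div k) powr a * s powr (1 + a)"
    and r: "1 \<le> r" "r < m"
  shows "prob {\<omega> \<in> space M. r \<le> card {j \<in> {1..m-1}. \<not> good_resample n k s \<mu> (\<lambda>i. X i \<omega>) (\<lambda>i j. \<alpha> i j \<omega>) j}}
         \<le> real (m - r) * (real k * exp (- real (n div k) / 8) + exp (- real k / 8))"
proof -
  define p where "p = real k * exp (- real (n div k) / 8) + exp (- real k / 8)"
  have "prob {\<omega> \<in> space M. r \<le> card {j \<in> {1..m-1}. \<not> good_resample n k s \<mu> (\<lambda>i. X i \<omega>) (\<lambda>i j. \<alpha> i j \<omega>) j}}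
        \<le> real (card {1..m-1}) * p / r"
    using bad_resample_event prob_bad_resample_le[OF k s] r
    by (intro prob_card_events_ge_le) (auto simp: p_def)
  also have "\<dots> \<le> real r * real (m - r) * p / r"
    using diff_one_le_mult_diff[OF r] by (intro divide_right_mono mult_right_mono) (simp_all add: p_def flip: of_nat_mult)
  also have "\<dots> = real (m - r) * p"
    using r by simp
  finally show ?thesis by (simp add: p_def)
qed

lemma many_deviating_X_event:
  "{\<omega> \<in> space M. k \<le> 2 * card (deviating_blocks n k s (\<lambda>i. X i \<omega> - \<mu>))} \<in> events"
  unfolding deviating_blocks_def by measurable

lemma many_bad_resamples_event:
  "{\<omega> \<in> space M. r \<le> card {j \<in> {1..m-1}. \<not> good_resample n k s \<mu> (\<lambda>i. X i \<omega>) (\<lambda>i j. \<alpha> i j \<omega>) j}}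
   \<in> events"
  by (rule events_card_ge) (rule bad_resample_event)

lemma prob_many_deviating_or_bad_le:
  assumes k: "1 \<le> k" "k \<le> n" and s: "0 \<le> s" "12 * Mom \<le> real (n div k) powr a * s powr (1 + a)"
    and r: "1 \<le> r" "r < m"
  shows "prob ({\<omega> \<in> space M. k \<le> 2 * card (deviating_blocks n k s (\<lambda>i. X i \<omega> - \<mu>))}
               \<union> {\<omega> \<in> space M. r \<le> card {j \<in> {1..m-1}. \<not> good_resample n k s \<mu> (\<lambda>i. X i \<omega>) (\<lambda>i j. \<alpha> i j \<omega>) j}})
         \<le> real (m - r) * (2 * real k * exp (- real (n div k) / 8) + 2 * exp (- real k / 8))"
    (is "prob (?Dev \<union> ?Many) \<le> _")
proof -
  define e0 e1 where "e0 = exp (- real k / 8)" and "e1 = exp (- real (n div k) / 8)"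
  have "prob (?Dev \<union> ?Many) \<le> prob ?Dev + prob ?Many"
    by (rule measure_Un_le[OF many_deviating_X_event many_bad_resamples_event])
  also have "\<dots> \<le> e0 + real (m - r) * (real k * e1 + e0)"
    unfolding e0_def e1_def using prob_many_deviating_X_le[OF k s] prob_many_bad_resamples_le[OF k s r]
    by (rule add_mono)
  also have "\<dots> \<le> real (m - r) * (2 * real k * e1 + 2 * e0)"
  proof -
    have "e0 \<le> real (m - r) * e0" "0 \<le> real (m - r) * (real k * e1)"
      using r by (simp_all add: e0_def e1_def)
    then show ?thesis by (simp add: algebra_simps)
  qed
  finally show ?thesis by (simp add: e0_def e1_def)
qed

lemma Uupper_exceedance_bound:
  fixes \<pi> :: "'w \<Rightarrow> nat \<Rightarrow> nat"
  assumes k: "1 \<le> k" "k \<le> n" and r: "1 \<le> r" "r \<le> m"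
    and s: "0 \<le> s" "12 * Mom \<le> real (n div k) powr a * s powr (1 + a)"
  shows "\<exists>A \<in> sets M.
           {\<omega> \<in> space M. Uupper n k m r (\<lambda>i. X i \<omega>) (\<lambda>i j. \<alpha> i j \<omega>) (\<pi> \<omega>) - ereal \<mu> > ereal (4 * s)} \<subseteq> A
           \<and> prob A \<le> real (m - r) * (2 * real k * exp (- real (n div k) / 8) + 2 * exp (- real k / 8))"
proof (cases "r < m")
  case False
  then have "Uupper n k m r x \<alpha>' \<pi>' = -\<infinity>" for x \<alpha>' \<pi>'
    using r by (intro Uupper_eq_MInf) simp
  then show ?thesis by (intro bexI[of _ "{}"]) auto
next
  case True
  define Dev where "Dev = {\<omega> \<in> space M. k \<le> 2 * card (deviating_blocks n k s (\<lambda>i. X i \<omega> - \<mu>))}"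
  define Many where
    "Many = {\<omega> \<in> space M. r \<le> card {j \<in> {1..m-1}. \<not> good_resample n k s \<mu> (\<lambda>i. X i \<omega>) (\<lambda>i j. \<alpha> i j \<omega>) j}}"
  have "{\<omega> \<in> space M. Uupper n k m r (\<lambda>i. X i \<omega>) (\<lambda>i j. \<alpha> i j \<omega>) (\<pi> \<omega>) - ereal \<mu> > ereal (4 * s)}
        \<subseteq> Dev \<union> Many"
  proof safe
    fix \<omega> assume "\<omega> \<in> space M" "\<omega> \<notin> Many"
      and "Uupper n k m r (\<lambda>i. X i \<omega>) (\<lambda>i j. \<alpha> i j \<omega>) (\<pi> \<omega>) - ereal \<mu> > ereal (4 * s)"
    then show "\<omega> \<in> Dev"
      using many_bad_resamples_if_Uupper_gt[OF k, of s "\<lambda>i. X i \<omega>" \<mu> m r "\<lambda>i j. \<alpha> i j \<omega>" "\<pi> \<omega>"]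
      by (auto simp: Dev_def Many_def not_le) (meson leI)
  qed
  moreover have "Dev \<union> Many \<in> events"
    unfolding Dev_def Many_def by (intro sets.Un many_deviating_X_event many_bad_resamples_event)
  moreover have "prob (Dev \<union> Many) \<le> real (m - r) * (2 * real k * exp (- real (n div k) / 8) + 2 * exp (- real k / 8))"
    unfolding Dev_def Many_def by (rule prob_many_deviating_or_bad_le[OF k s r(1) True])
  ultimately show ?thesis by blast
qed

end

theorem theorem3:
  fixes M :: "'w measure"
    and X :: "nat \<Rightarrow> 'w \<Rightarrow> real"
    and \<alpha> :: "nat \<Rightarrow> nat \<Rightarrow> 'w \<Rightarrow> real"
    and \<pi> :: "'w \<Rightarrow> nat \<Rightarrow> nat"
    and n k m r :: nat and \<mu> a Mom :: real
  defines "I \<equiv> {1..n} <+> ({1..n} \<times> {1..m-1})"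
  defines "F \<equiv> (\<lambda>t. case t of Inl i \<Rightarrow> X i | Inr (i, j) \<Rightarrow> \<alpha> i j)"
  assumes P: "prob_space M"
    and k: "1 \<le> k" "k \<le> n"
    and rm: "1 \<le> r" "r \<le> m"
    and a: "0 < a" "a \<le> 1"
    and indep: "prob_space.indep_vars M (\<lambda>_. borel) F I"
    and pi_meas: "\<pi> \<in> measurable M (count_space UNIV)"
    and indep_pi: "distr M (PiM I (\<lambda>_. borel) \<Otimes>\<^sub>M count_space UNIV)
                       (\<lambda>\<omega>. (\<lambda>t\<in>I. F t \<omega>, \<pi> \<omega>))
                   = distr M (PiM I (\<lambda>_. borel)) (\<lambda>\<omega>. \<lambda>t\<in>I. F t \<omega>)
                       \<Otimes>\<^sub>M distr M (count_space UNIV) \<pi>"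
    and ident: "\<And>i. i \<in> {1..n} \<Longrightarrow> distr M borel (X i) = distr M borel (X 1)"
    and symm: "distr M borel (\<lambda>\<omega>. X 1 \<omega> - \<mu>) = distr M borel (\<lambda>\<omega>. \<mu> - X 1 \<omega>)"
    and int1: "integrable M (X 1)"
    and intm: "integrable M (\<lambda>\<omega>. \<bar>X 1 \<omega> - integral\<^sup>L M (X 1)\<bar> powr (1 + a))"
    and mom_eq: "integral\<^sup>L M (\<lambda>\<omega>. \<bar>X 1 \<omega> - integral\<^sup>L M (X 1)\<bar> powr (1 + a)) = Mom"
    and rad_val: "\<And>i j \<omega>. i \<in> {1..n} \<Longrightarrow> j \<in> {1..m-1} \<Longrightarrow> \<omega> \<in> space M \<Longrightarrow>
                    \<alpha> i j \<omega> \<in> {-1, 1}"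
    and rad_prob: "\<And>i j. i \<in> {1..n} \<Longrightarrow> j \<in> {1..m-1} \<Longrightarrow>
                    measure M {\<omega> \<in> space M. \<alpha> i j \<omega> = 1} = 1 / 2"
    and pi_perm: "\<And>\<omega>. \<omega> \<in> space M \<Longrightarrow> \<pi> \<omega> permutes {0..<m}"
    and pi_unif: "\<And>p. p permutes {0..<m} \<Longrightarrow>
                    measure M {\<omega> \<in> space M. \<pi> \<omega> = p} = 1 / fact m"
  shows "\<exists>A \<in> sets M.
           {\<omega> \<in> space M.
              Uupper n k m r (\<lambda>i. X i \<omega>) (\<lambda>i j. \<alpha> i j \<omega>) (\<pi> \<omega>) - ereal \<mu>
                > ereal (4 * ((12 * Mom) powr (1 / a) / real (n div k)) powr (a / (1 + a)))}
             \<subseteq> A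
         \<and> measure M A \<le> real (m - r) *
              (2 * real k * exp (- real (n div k) / 8) + 2 * exp (- real k / 8))"
proof -
  interpret prob_space M
    by (rule P)
  have indep': "indep_vars (\<lambda>_. borel) (\<lambda>t. case t of Inl i \<Rightarrow> X i | Inr (i, j) \<Rightarrow> \<alpha> i j)
                  ({1..n} <+> ({1..n} \<times> {1..m-1}))"
    using indep unfolding I_def F_def .
  interpret mom_resampling M X \<alpha> n m \<mu> a Mom
    by (rule mom_resampling.intro[OF P mom_resampling_axioms.intro[OF a indep' ident symm int1 intm
          mom_eq rad_val rad_prob]])
  define s where "s = ((12 * Mom) powr (1 / a) / real (n div k)) powr (a / (1 + a))"
  have "real (n div k) powr a * s powr (1 + a) = 12 * Mom"
    unfolding s_def
  proof (rule powr_scale_cancel)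
    show "0 \<le> 12 * Mom" using mom_eq[symmetric] by simp
    show "0 < real (n div k)" using k by (simp add: div_greater_zero_iff)
  qed (use a in simp)
  moreover have "0 \<le> s"
    unfolding s_def by simp
  ultimately show ?thesis
    using Uupper_exceedance_bound[OF k rm, of s \<pi>] unfolding s_def by simp
qed

end
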